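(* For every $n,m\ge1$, the isolation-resilience of a synchronized communication system (SCS) whose communication graph is the $n\times m$ grid communication graph equals $n\cdot m-\min(n,m)-1$.
   Context: Model. A system consists of pairwise disjoint unit circles $C_1,\dots,C_N$ in the plane (trajectories) and a communication range $r>0$. Its communication graph $G$ has vertex set $\{C_1,\dots,C_N\}$, with $C_i,C_j$ adjacent iff the distance between their centres is at most $2+r$; $G$ is assumed connected. Positions on a circle are angles measured from the positive horizontal axis, modulo $2\pi$. For an edge $(i,j)$, the link position $\phi_{ij}$ is the angle of the point of $C_i$ closest to $C_j$. A schedule is a pair $F=(f,g)$ with $f(C_i)\in[0,2\pi)$, $g(C_i)\in\{1,-1\}$ ($1$ = counterclockwise); a robot following it on $C_i$ is at angle $f(C_i)+g(C_i)\cdot2\pi t$ at time $t$. $F$ is a synchronization schedule if $g(C_i)=-g(C_j)$ for every edge $(i,j)$ and robots following $F$ on adjacent $C_i,C_j$ are at $\phi_{ij}$ and $\phi_{ji}$ at exactly the same times. A synchronized communication system (SCS) consists of $N$ robots, initially one on each circle, following a synchronization schedule, with the switching rule: whenever a robot on $C_i$ reaches $\phi_{ij}$ at time $t$ and $C_j$ contains no robot, it instantly passes to $C_j$ and from then on follows the schedule of $C_j$; if $C_j$ contains a robot (then at $\phi_{ji}$), the two meet (exchange information) and each stays on its circle. A partial SCS is obtained by letting some robots leave (possibly at different times); remaining robots never leave. A surviving robot $u$ starves if every time $u$ arrives at a link position $\phi_{ij}$ of its current circle $C_i$, the circle $C_j$ is empty; the system is in starvation state if all surviving robots starve. The isolation-resilience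 of an SCS is the largest number $k$ such that, whichever $k$ robots leave, the system does not fall into starvation state. Grid. The $n\times m$ grid communication graph consists of $nm$ unit circles, circle $(i,j)$ in row $i$ (rows horizontal, row 1 on top) and column $j$ (columns vertical, column 1 on the left), centres on a square lattice, circle $(i,j)$ adjacent exactly to the existing circles $(i\pm1,j)$, $(i,j\pm1)$. *)

theory Defs
  imports Complex_Main
begin

text \<open>Circles of the n x m grid are indexed by cells (i,j), row i in 1..n (row 1 on top),
column j in 1..m (column 1 on the left).  Robots are identified with the circle
on which they start, so robots are also indexed by cells.\<close>

type_synonym cell = "nat \<times> nat"

definition grid :: "nat \<Rightarrow> nat \<Rightarrow> cell set" where
  "grid n m = {1..n} \<times> {1..m}"

definition grid_adj :: "cell \<Rightarrow> cell \<Rightarrow> bool" where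
  "grid_adj c d \<longleftrightarrow>
     (fst c = fst d \<and> (snd d = snd c + 1 \<or> snd c = snd d + 1)) \<or>
     (snd c = snd d \<and> (fst d = fst c + 1 \<or> fst c = fst d + 1))"

text \<open>Link position of circle c towards neighbouring circle d: the angle of the point of
c closest to d, i.e. the direction from the centre of c to the centre of d
(right: 0, up (row above): pi/2, left: pi, down (row below): 3 pi/2).\<close>

definition link_angle :: "cell \<Rightarrow> cell \<Rightarrow> real" where
  "link_angle c d =
     (if fst d = fst c \<and> snd d = snd c + 1 then 0
      else if snd d = snd c \<and> fst c = fst d + 1 then pi / 2
      else if fst d = fst c \<and> snd c = snd d + 1 then pi
      else 3 * pi / 2)"

definition at_angle :: "(cell \<Rightarrow> real) \<Rightarrow> (cell \<Rightarrow> int) \<Rightarrow> cell \<Rightarrow> real \<Rightarrow> real \<Rightarrow> bool" where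
  "at_angle f g c \<phi> t \<longleftrightarrow> (\<exists>k::int. f c + of_int (g c) * 2 * pi * t = \<phi> + 2 * pi * of_int k)"

definition sync_schedule :: "nat \<Rightarrow> nat \<Rightarrow> (cell \<Rightarrow> real) \<Rightarrow> (cell \<Rightarrow> int) \<Rightarrow> bool" where
  "sync_schedule n m f g \<longleftrightarrow>
     (\<forall>c\<in>grid n m. 0 \<le> f c \<and> f c < 2 * pi \<and> (g c = 1 \<or> g c = -1)) \<and>
     (\<forall>c\<in>grid n m. \<forall>d\<in>grid n m. grid_adj c d \<longrightarrow>
        g c = - g d \<and>
        (\<forall>t::real. at_angle f g c (link_angle c d) t \<longleftrightarrow> at_angle f g d (link_angle d c) t))"

definition event_times :: "nat \<Rightarrow> nat \<Rightarrow> (cell \<Rightarrow> real) \<Rightarrow> (cell \<Rightarrow> int) \<Rightarrow> real set" where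
  "event_times n m f g = {t. 0 \<le> t \<and> (\<exists>c\<in>grid n m. \<exists>d\<in>grid n m.
       grid_adj c d \<and> at_angle f g c (link_angle c d) t)}"

primrec ev :: "nat \<Rightarrow> nat \<Rightarrow> (cell \<Rightarrow> real) \<Rightarrow> (cell \<Rightarrow> int) \<Rightarrow> nat \<Rightarrow> real" where
  "ev n m f g 0 = Inf (event_times n m f g)"
| "ev n m f g (Suc k) = Inf {t \<in> event_times n m f g. ev n m f g k < t}"

text \<open>A configuration maps each robot to the circle it currently is on (None: it has left).\<close>

type_synonym config = "cell \<Rightarrow> cell option"

definition occupied :: "nat \<Rightarrow> nat \<Rightarrow> config \<Rightarrow> cell \<Rightarrow> bool" where
  "occupied n m s d \<longleftrightarrow> (\<exists>r\<in>grid n m. s r = Some d)"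

definition moves_to :: "nat \<Rightarrow> nat \<Rightarrow> (cell \<Rightarrow> real) \<Rightarrow> (cell \<Rightarrow> int) \<Rightarrow> real \<Rightarrow> config
    \<Rightarrow> cell \<Rightarrow> cell \<Rightarrow> bool" where
  "moves_to n m f g t s c d \<longleftrightarrow>
     d \<in> grid n m \<and> grid_adj c d \<and> at_angle f g c (link_angle c d) t \<and> \<not> occupied n m s d"

definition step :: "nat \<Rightarrow> nat \<Rightarrow> (cell \<Rightarrow> real) \<Rightarrow> (cell \<Rightarrow> int) \<Rightarrow> real \<Rightarrow> config \<Rightarrow> config" where
  "step n m f g t s = (\<lambda>r. case s r of
       None \<Rightarrow> None
     | Some c \<Rightarrow> (if \<exists>d. moves_to n m f g t s c d
                  then Some (SOME d. moves_to n m f g t s c d) else Some c))"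

definition meet :: "nat \<Rightarrow> nat \<Rightarrow> (cell \<Rightarrow> real) \<Rightarrow> (cell \<Rightarrow> int) \<Rightarrow> real \<Rightarrow> config \<Rightarrow> bool" where
  "meet n m f g t s \<longleftrightarrow>
     (\<exists>c\<in>grid n m. \<exists>d\<in>grid n m. grid_adj c d \<and> at_angle f g c (link_angle c d) t \<and>
        occupied n m s c \<and> occupied n m s d)"

text \<open>Partial SCS: the robots in S leave; robot r \<in> S leaves after event number lv r - 1
and before event number lv r (lv r = 0: before the first event).\<close>

definition remove_left :: "cell set \<Rightarrow> (cell \<Rightarrow> nat) \<Rightarrow> nat \<Rightarrow> config \<Rightarrow> config" where
  "remove_left S lv k s = (\<lambda>r. if r \<in> S \<and> lv r \<le> k then None else s r)"

text \<open>run ... k: configuration just before the switching rule is applied at event ev k.\<close>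

primrec run :: "nat \<Rightarrow> nat \<Rightarrow> (cell \<Rightarrow> real) \<Rightarrow> (cell \<Rightarrow> int) \<Rightarrow> cell set \<Rightarrow> (cell \<Rightarrow> nat)
    \<Rightarrow> nat \<Rightarrow> config" where
  "run n m f g S lv 0 = remove_left S lv 0 (\<lambda>r. if r \<in> grid n m then Some r else None)"
| "run n m f g S lv (Suc k) =
     remove_left S lv (Suc k) (step n m f g (ev n m f g k) (run n m f g S lv k))"

definition starvation :: "nat \<Rightarrow> nat \<Rightarrow> (cell \<Rightarrow> real) \<Rightarrow> (cell \<Rightarrow> int) \<Rightarrow> cell set
    \<Rightarrow> (cell \<Rightarrow> nat) \<Rightarrow> bool" where
  "starvation n m f g S lv \<longleftrightarrow>
     (\<exists>K. \<forall>k\<ge>K. \<not> meet n m f g (ev n m f g k) (run n m f g S lv k))"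

definition resilient_to :: "nat \<Rightarrow> nat \<Rightarrow> (cell \<Rightarrow> real) \<Rightarrow> (cell \<Rightarrow> int) \<Rightarrow> nat \<Rightarrow> bool" where
  "resilient_to n m f g k \<longleftrightarrow>
     (\<forall>S lv. S \<subseteq> grid n m \<and> card S = k \<longrightarrow> \<not> starvation n m f g S lv)"

definition isolation_resilience :: "nat \<Rightarrow> nat \<Rightarrow> (cell \<Rightarrow> real) \<Rightarrow> (cell \<Rightarrow> int) \<Rightarrow> int" where
  "isolation_resilience n m f g =
     (GREATEST k::int. k = -1 \<or> (0 \<le> k \<and> k \<le> int (n * m) \<and> resilient_to n m f g (nat k)))"

end

theory Submission
  imports Defs
begin

text \<open>A synchronization schedule of the grid is rigid.  When the robot that started on circle (1,1)
  has turned by q quarter turns, the robots at link positions are precisely those on the circles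
  paired by a matching of the grid, each at the link towards its partner: horizontal edges for even
  q, vertical ones for odd q, alternating between the two parity classes of edges.  No link is
  reached at any other time.

  Robots on distinct rows and columns, for instance on the diagonal, stay so under every matching
  and thus never meet: when min(n,m) robots remain on the diagonal, the system starves.  Conversely,
  if min(n,m)+1 robots survive, two of them share a row or a column once all leaving robots are
  gone.  Were the system starving, every robot would just follow the matchings; these move the
  common line of the two robots as a whole and act on their positions within it as alternating
  swaps of a path, and such swaps eventually make the two robots partners, so they meet.\<close>

section \<open>Alternating swaps on a path\<close>

text \<open>Swapping along the matching of the path 1, ..., N whose edges are the pairs {x, x + 1} with
  x mod 2 = p.\<close>

definition path_swap :: "nat \<Rightarrow> nat \<Rightarrow> nat \<Rightarrow> nat" where
  "path_swap p N x =
     (if x mod 2 = p then (if x < N then Suc x else x) else (if 2 \<le> x then x - 1 else x))"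

lemma path_swap_range: "1 \<le> x \<Longrightarrow> x \<le> N \<Longrightarrow> 1 \<le> path_swap p N x \<and> path_swap p N x \<le> N"
  unfolding path_swap_def by auto

lemma path_swap_up: "x mod 2 = p \<Longrightarrow> x < N \<Longrightarrow> path_swap p N x = Suc x"
  unfolding path_swap_def by auto

lemma path_swap_down: "x mod 2 \<noteq> p \<Longrightarrow> 2 \<le> x \<Longrightarrow> path_swap p N x = x - 1"
  unfolding path_swap_def by auto

lemma path_swap_cases:
  "path_swap p N x = Suc x \<and> x mod 2 = p \<and> x < N \<or> path_swap p N x = x \<or>
   path_swap p N x = x - 1 \<and> x mod 2 \<noteq> p \<and> 2 \<le> x"
  unfolding path_swap_def by auto

lemma path_swap_involutive:
  assumes p: "p < 2" and x: "1 \<le> x" "x \<le> N"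
  shows "path_swap p N (path_swap p N x) = x"
proof (cases "x mod 2 = p \<and> x < N")
  case True
  have "Suc x mod 2 \<noteq> p" using True by presburger
  then have "path_swap p N (Suc x) = x" using path_swap_down[of "Suc x" p N] x by simp
  then show ?thesis using path_swap_up[of x p N] True by simp
next
  case not_up: False
  show ?thesis
  proof (cases "x mod 2 \<noteq> p \<and> 2 \<le> x")
    case True
    have "Suc y mod 2 \<noteq> p \<Longrightarrow> y mod 2 = p" for y using p by presburger
    then have "(x - 1) mod 2 = p" using True by (metis Suc_diff_1 less_le_trans pos2)
    then have "path_swap p N (x - 1) = x" using path_swap_up[of "x - 1" p N] True x by fastforce
    then show ?thesis using path_swap_down[of x p N] True by simp
  next
    case False
    then show ?thesis using not_up unfolding path_swap_def by auto
  qed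
qed

lemma path_swap_inj:
  "p < 2 \<Longrightarrow> 1 \<le> x \<Longrightarrow> x \<le> N \<Longrightarrow> 1 \<le> y \<Longrightarrow> y \<le> N \<Longrightarrow>
   path_swap p N x = path_swap p N y \<Longrightarrow> x = y"
  by (metis path_swap_involutive)

lemma path_swap_mono:
  assumes p: "p < 2" and "1 \<le> x" "x < y" "y \<le> N" "path_swap p N x \<noteq> y"
  shows "path_swap p N x < path_swap p N y"
proof (cases "y = Suc x")
  case True
  have le: "path_swap p N x \<le> x" using path_swap_cases[of p N x] assms True by auto
  have "path_swap p N y \<noteq> x"
  proof
    assume "path_swap p N y = x"
    then have "y mod 2 \<noteq> p" using path_swap_cases[of p N y] True by auto
    then have "x mod 2 = p" using True p by presburger
    then have "path_swap p N x = y" using path_swap_up[of x p N] True assms by auto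
    then show False using assms by simp
  qed
  then have "path_swap p N y > x" using path_swap_cases[of p N y] True by auto
  then show ?thesis using le by simp
next
  case False
  then have y2: "x + 2 \<le> y" using assms by simp
  have a: "path_swap p N x \<le> Suc x" using path_swap_cases[of p N x] by auto
  have b: "path_swap p N y \<ge> y - 1" using path_swap_cases[of p N y] by auto
  have "path_swap p N x \<noteq> path_swap p N y"
  proof
    assume "path_swap p N x = path_swap p N y"
    then have "path_swap p N x = Suc x" "path_swap p N y = y - 1" "y = x + 2" using a b y2 by auto
    then have "x mod 2 = p" "y mod 2 \<noteq> p"
      using path_swap_cases[of p N x] path_swap_cases[of p N y] y2 by auto
    then show False using \<open>y = x + 2\<close> by presburger
  qed
  then show ?thesis using a b y2 by simp
qed

lemma swap_orbit_range:
  assumes x: "\<And>t. x (Suc t) = path_swap (pp t) N (x t)" and x0: "1 \<le> x 0" "x 0 \<le> N"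
  shows "1 \<le> x t \<and> x t \<le> N"
  by (induction t) (use x0 path_swap_range x in auto)

lemma swap_orbit_climbs:
  assumes x: "\<And>t. x (Suc t) = path_swap (pp t) N (x t)" and x0: "1 \<le> x 0" "x 0 \<le> N"
    and pp: "\<And>t. pp (Suc t) = 1 - pp t"
  shows "x t mod 2 = pp t \<Longrightarrow> \<exists>t'. x t' = N"
proof (induction "N - x t" arbitrary: t rule: less_induct)
  case less
  have r: "1 \<le> x t \<and> x t \<le> N" using swap_orbit_range[OF x x0] .
  show ?case
  proof (cases "x t = N")
    case False
    then have xs: "x (Suc t) = Suc (x t)" using x[of t] less.prems r path_swap_up by simp
    have "x (Suc t) mod 2 = pp (Suc t)" using xs less.prems pp[of t] by presburger
    moreover have "N - x (Suc t) < N - x t" using xs False r by auto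
    ultimately show ?thesis using less.hyps by blast
  qed blast
qed

lemma swap_orbit_aligns:
  assumes x: "\<And>t. x (Suc t) = path_swap (pp t) N (x t)" and x0: "1 \<le> x 0" "x 0 \<le> N"
    and pp: "\<And>t. pp t < 2" "\<And>t. pp (Suc t) = 1 - pp t"
  shows "\<exists>t. x t mod 2 = pp t"
proof -
  have "x t mod 2 \<noteq> pp t \<Longrightarrow> \<exists>t'. x t' mod 2 = pp t'" for t
  proof (induction "x t" arbitrary: t rule: less_induct)
    case less
    have r: "1 \<le> x t \<and> x t \<le> N" using swap_orbit_range[OF x x0] .
    show ?case
    proof (cases "2 \<le> x t")
      case True
      then have "x (Suc t) = x t - 1" using x[of t] less.prems path_swap_down by simp
      then show ?thesis using less.hyps[of "Suc t"] True by fastforce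
    next
      case False
      then have x1: "x t = 1" using r by auto
      then have "x (Suc t) = 1" using x[of t] less.prems unfolding path_swap_def by auto
      moreover have "pp t = 0" using less.prems x1 pp(1)[of t] by auto
      ultimately have "x (Suc t) mod 2 = pp (Suc t)" using pp(2)[of t] by simp
      then show ?thesis by blast
    qed
  qed
  then show ?thesis by blast
qed

lemma swap_orbit_reaches_end:
  assumes x: "\<And>t. x (Suc t) = path_swap (pp t) N (x t)" and x0: "1 \<le> x 0" "x 0 \<le> N"
    and pp: "\<And>t. pp t < 2" "\<And>t. pp (Suc t) = 1 - pp t"
  shows "\<exists>t. x t = N"
  using swap_orbit_aligns[OF assms] swap_orbit_climbs[OF x x0 pp(2)] by blast

text \<open>Two tokens moved by the same alternating swaps keep their order until they are swapped with
  each other; the lower one cannot stay below forever, since it eventually reaches the top end.\<close>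

lemma swap_orbits_meet_ordered:
  assumes x: "\<And>t. x (Suc t) = path_swap (pp t) N (x t)" and x0: "1 \<le> x 0" "x 0 \<le> N"
    and y: "\<And>t. y (Suc t) = path_swap (pp t) N (y t)" and y0: "1 \<le> y 0" "y 0 \<le> N"
    and pp: "\<And>t. pp t < 2" "\<And>t. pp (Suc t) = 1 - pp t"
    and lt: "x 0 < y 0"
  shows "\<exists>t. path_swap (pp t) N (x t) = y t"
proof (rule ccontr)
  assume "\<not> ?thesis"
  then have apart: "\<And>t. path_swap (pp t) N (x t) \<noteq> y t" by blast
  have "x t < y t" for t
  proof (induction t)
    case (Suc t)
    show ?case
      using path_swap_mono[OF pp(1) _ Suc _ apart[of t]] swap_orbit_range[OF x x0, of t]
        swap_orbit_range[OF y y0, of t] x y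
      by simp
  qed (use lt in simp)
  moreover obtain t where "x t = N" using swap_orbit_reaches_end[OF x x0 pp] by blast
  ultimately show False using swap_orbit_range[OF y y0, of t] by (metis leD)
qed

lemma swap_orbits_meet:
  assumes x: "\<And>t. x (Suc t) = path_swap (pp t) N (x t)" and x0: "1 \<le> x 0" "x 0 \<le> N"
    and y: "\<And>t. y (Suc t) = path_swap (pp t) N (y t)" and y0: "1 \<le> y 0" "y 0 \<le> N"
    and pp: "\<And>t. pp t < 2" "\<And>t. pp (Suc t) = 1 - pp t"
    and ne: "x 0 \<noteq> y 0"
  shows "\<exists>t. path_swap (pp t) N (x t) = y t"
proof (cases "x 0 < y 0")
  case True then show ?thesis using swap_orbits_meet_ordered[OF x x0 y y0 pp] by blast
next
  case False
  then obtain t where "path_swap (pp t) N (y t) = x t"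
    using swap_orbits_meet_ordered[OF y y0 x x0 pp] ne by fastforce
  then have "path_swap (pp t) N (x t) = y t"
    using path_swap_involutive[OF pp(1)] swap_orbit_range[OF y y0, of t] by metis
  then show ?thesis by blast
qed

section \<open>Matchings of the grid\<close>

text \<open>The matching of the circles whose robots are at link positions when the phase of circle
  (1,1) is q quarter turns.\<close>

definition swap_parity :: "int \<Rightarrow> nat" where
  "swap_parity q = (if q mod 4 = 0 \<or> q mod 4 = 3 then 1 else 0)"

definition grid_matching :: "nat \<Rightarrow> nat \<Rightarrow> int \<Rightarrow> cell \<Rightarrow> cell" where
  "grid_matching n m q c =
     (if even q then (fst c, path_swap (swap_parity q) m (snd c))
      else (path_swap (swap_parity q) n (fst c), snd c))"

definition chess_sign :: "cell \<Rightarrow> int" where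
  "chess_sign c = (if even (fst c + snd c) then 1 else -1)"

definition half_turns :: "cell \<Rightarrow> int" where
  "half_turns c = (if even (snd c) then 1 else 0)"

definition link_index :: "cell \<Rightarrow> cell \<Rightarrow> int" where
  "link_index c d =
     (if fst d = fst c \<and> snd d = snd c + 1 then 0
      else if snd d = snd c \<and> fst c = fst d + 1 then 1
      else if fst d = fst c \<and> snd c = snd d + 1 then 2 else 3)"

lemma link_angle_link_index: "link_angle c d = of_int (link_index c d) * pi / 2"
  unfolding link_angle_def link_index_def by auto

lemma swap_parity_less_2: "swap_parity q < 2"
  by (simp add: swap_parity_def)

lemma swap_parity_flip: "odd s \<Longrightarrow> swap_parity (q + 2 * s) = 1 - swap_parity q"
  unfolding swap_parity_def by presburger

lemma grid_matching_periodic: "grid_matching n m (q + 4 * z) = grid_matching n m q"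
proof -
  have "even (q + 4 * z) \<longleftrightarrow> even q" "(q + 4 * z) mod 4 = q mod 4" by presburger+
  then show ?thesis unfolding grid_matching_def swap_parity_def by (simp add: fun_eq_iff)
qed

lemma grid_matching_transpose:
  "grid_matching n m q (prod.swap c) = prod.swap (grid_matching m n (3 - q) c)"
proof -
  have "even (3 - q) \<longleftrightarrow> odd q" "swap_parity (3 - q) = swap_parity q"
    unfolding swap_parity_def by presburger+
  then show ?thesis unfolding grid_matching_def by simp
qed

lemma grid_matching_even: "even q \<Longrightarrow> grid_matching n m q c = (fst c, path_swap (swap_parity q) m (snd c))"
  unfolding grid_matching_def by simp

lemma grid_matching_odd: "odd q \<Longrightarrow> grid_matching n m q c = (path_swap (swap_parity q) n (fst c), snd c)"
  unfolding grid_matching_def by simp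

lemma grid_matching_in_grid: "c \<in> grid n m \<Longrightarrow> grid_matching n m q c \<in> grid n m"
  unfolding grid_matching_def grid_def using path_swap_range by (auto simp: mem_Times_iff)

lemma grid_matching_involutive: "c \<in> grid n m \<Longrightarrow> grid_matching n m q (grid_matching n m q c) = c"
  unfolding grid_matching_def grid_def using path_swap_involutive[OF swap_parity_less_2]
  by (auto simp: mem_Times_iff)

lemma grid_matching_inj:
  "c \<in> grid n m \<Longrightarrow> d \<in> grid n m \<Longrightarrow> grid_matching n m q c = grid_matching n m q d \<Longrightarrow> c = d"
  by (metis grid_matching_involutive)

lemma grid_matching_adj: "grid_matching n m q c \<noteq> c \<Longrightarrow> grid_adj c (grid_matching n m q c)"
  unfolding grid_matching_def grid_adj_def
  using path_swap_cases[of "swap_parity q" m "snd c"] path_swap_cases[of "swap_parity q" n "fst c"]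
  by auto

text \<open>Both cells are moved by the same injective map on rows (odd q) or on columns (even q).\<close>

lemma grid_matching_separated:
  assumes "c \<in> grid n m" "d \<in> grid n m" "fst c \<noteq> fst d" "snd c \<noteq> snd d"
  shows "fst (grid_matching n m q c) \<noteq> fst (grid_matching n m q d) \<and>
         snd (grid_matching n m q c) \<noteq> snd (grid_matching n m q d)"
  using assms path_swap_inj[OF swap_parity_less_2] unfolding grid_matching_def grid_def
  by (auto simp: mem_Times_iff)

lemma grid_matching_right:
  assumes "Suc j \<le> m" "1 \<le> j"
  shows "grid_matching n m q (i, j) = (i, Suc j) \<longleftrightarrow>
         (chess_sign (i, j) * q + 2 * half_turns (i, j)) mod 4 = 0"
proof -
  have "grid_matching n m q (i, j) = (i, Suc j) \<longleftrightarrow> even q \<and> j mod 2 = swap_parity q"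
    unfolding grid_matching_def
    using path_swap_cases[of "swap_parity q" m j] path_swap_up[of j "swap_parity q" m] assms by auto
  also have "\<dots> \<longleftrightarrow> (chess_sign (i, j) * q + 2 * half_turns (i, j)) mod 4 = 0"
    unfolding swap_parity_def chess_sign_def half_turns_def by (auto; presburger)
  finally show ?thesis .
qed

lemma grid_matching_left:
  assumes "2 \<le> j"
  shows "grid_matching n m q (i, j) = (i, j - 1) \<longleftrightarrow>
         (chess_sign (i, j) * q + 2 * half_turns (i, j) - 2) mod 4 = 0"
proof -
  have "grid_matching n m q (i, j) = (i, j - 1) \<longleftrightarrow> even q \<and> j mod 2 \<noteq> swap_parity q"
    unfolding grid_matching_def
    using path_swap_cases[of "swap_parity q" m j] path_swap_down[of j "swap_parity q" m] assms by auto
  also have "\<dots> \<longleftrightarrow> (chess_sign (i, j) * q + 2 * half_turns (i, j) - 2) mod 4 = 0"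
    unfolding swap_parity_def chess_sign_def half_turns_def by (auto; presburger)
  finally show ?thesis .
qed

lemma grid_matching_up:
  assumes "2 \<le> i"
  shows "grid_matching n m q (i, j) = (i - 1, j) \<longleftrightarrow>
         (chess_sign (i, j) * q + 2 * half_turns (i, j) - 1) mod 4 = 0"
proof -
  have "grid_matching n m q (i, j) = (i - 1, j) \<longleftrightarrow> odd q \<and> i mod 2 \<noteq> swap_parity q"
    unfolding grid_matching_def
    using path_swap_cases[of "swap_parity q" n i] path_swap_down[of i "swap_parity q" n] assms by auto
  also have "\<dots> \<longleftrightarrow> (chess_sign (i, j) * q + 2 * half_turns (i, j) - 1) mod 4 = 0"
    unfolding swap_parity_def chess_sign_def half_turns_def by (auto; presburger)
  finally show ?thesis .
qed

lemma grid_matching_down: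
  assumes "Suc i \<le> n" "1 \<le> i"
  shows "grid_matching n m q (i, j) = (Suc i, j) \<longleftrightarrow>
         (chess_sign (i, j) * q + 2 * half_turns (i, j) - 3) mod 4 = 0"
proof -
  have "grid_matching n m q (i, j) = (Suc i, j) \<longleftrightarrow> odd q \<and> i mod 2 = swap_parity q"
    unfolding grid_matching_def
    using path_swap_cases[of "swap_parity q" n i] path_swap_up[of i "swap_parity q" n] assms by auto
  also have "\<dots> \<longleftrightarrow> (chess_sign (i, j) * q + 2 * half_turns (i, j) - 3) mod 4 = 0"
    unfolding swap_parity_def chess_sign_def half_turns_def by (auto; presburger)
  finally show ?thesis .
qed

lemma grid_matching_eq_neighbour_iff:
  assumes c: "c \<in> grid n m" and d: "d \<in> grid n m" and adj: "grid_adj c d"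
  shows "grid_matching n m q c = d \<longleftrightarrow>
         (chess_sign c * q + 2 * half_turns c - link_index c d) mod 4 = 0"
proof -
  obtain i j i' j' where cd: "c = (i, j)" "d = (i', j')" by force
  have bounds: "1 \<le> i" "i \<le> n" "1 \<le> j" "j \<le> m" "1 \<le> i'" "i' \<le> n" "1 \<le> j'" "j' \<le> m"
    using c d cd unfolding grid_def by auto
  consider "i' = i" "j' = Suc j" | "i' = i" "j = Suc j'" | "j' = j" "i' = Suc i" | "j' = j" "i = Suc i'"
    using adj unfolding grid_adj_def cd by auto
  then show ?thesis
  proof cases
    case 1 then show ?thesis using grid_matching_right[of j m n q i] bounds
        unfolding cd link_index_def by simp
  next
    case 2 then show ?thesis using grid_matching_left[of j n m q i] bounds
        unfolding cd link_index_def by simp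
  next
    case 3 then show ?thesis using grid_matching_down[of i n m q j] bounds
        unfolding cd link_index_def by simp
  next
    case 4 then show ?thesis using grid_matching_up[of i n m q j] bounds
        unfolding cd link_index_def by simp
  qed
qed

section \<open>Rigidity of synchronization schedules\<close>

lemma sync_schedule_edge:
  assumes S: "sync_schedule n m f g" and c: "c \<in> grid n m" and d: "d \<in> grid n m"
    and adj: "grid_adj c d"
  shows "g d = - g c \<and> (\<exists>k::int. f c + f d = link_angle c d + link_angle d c + 2 * pi * of_int k)"
proof -
  have gc: "g c = 1 \<or> g c = -1" using S c unfolding sync_schedule_def by auto
  have gd: "g c = - g d"
    and same_times: "\<And>t. at_angle f g c (link_angle c d) t \<longleftrightarrow> at_angle f g d (link_angle d c) t"
    using S c d adj unfolding sync_schedule_def by blast+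
  define t where "t = (link_angle c d - f c) / (of_int (g c) * 2 * pi)"
  have ct: "of_int (g c) * 2 * pi * t = link_angle c d - f c"
    using gc unfolding t_def by auto
  then have "at_angle f g c (link_angle c d) t" unfolding at_angle_def by (intro exI[of _ 0]) simp
  then obtain k :: int where k: "f d + of_int (g d) * 2 * pi * t = link_angle d c + 2 * pi * of_int k"
    using same_times unfolding at_angle_def by blast
  have "of_int (g d) * 2 * pi * t = - (link_angle c d - f c)" using ct gd by simp
  then have "f c + f d = link_angle c d + link_angle d c + 2 * pi * of_int k" using k by linarith
  then show ?thesis using gd by auto
qed

definition normal_schedule_at :: "(cell \<Rightarrow> real) \<Rightarrow> (cell \<Rightarrow> int) \<Rightarrow> cell \<Rightarrow> bool" where
  "normal_schedule_at f g c \<longleftrightarrow> g c = g (1,1) * chess_sign c \<and>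
     (\<exists>k::int. f c = of_int (chess_sign c) * f (1,1) + pi * of_int (half_turns c) + 2 * pi * of_int k)"

lemma normal_schedule_at_right:
  assumes S: "sync_schedule n m f g" and c: "(i, j) \<in> grid n m" and d: "(i, Suc j) \<in> grid n m"
    and normal: "normal_schedule_at f g (i, j)"
  shows "normal_schedule_at f g (i, Suc j)"
proof -
  obtain k where k: "f (i, j) + f (i, Suc j) = pi + 2 * pi * of_int k"
    and g: "g (i, Suc j) = - g (i, j)"
    using sync_schedule_edge[OF S c d] unfolding grid_adj_def link_angle_def by auto
  obtain k0 where k0: "f (i, j) =
      of_int (chess_sign (i, j)) * f (1,1) + pi * of_int (half_turns (i, j)) + 2 * pi * of_int k0"
    and g0: "g (i, j) = g (1,1) * chess_sign (i, j)"
    using normal unfolding normal_schedule_at_def by blast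
  have flip: "chess_sign (i, Suc j) = - chess_sign (i, j)"
    "half_turns (i, Suc j) = 1 - half_turns (i, j)"
    unfolding chess_sign_def half_turns_def by auto
  have "f (i, Suc j) = of_int (chess_sign (i, Suc j)) * f (1,1) +
      pi * of_int (half_turns (i, Suc j)) + 2 * pi * of_int (k - k0)"
    and "g (i, Suc j) = g (1,1) * chess_sign (i, Suc j)"
    using k k0 g g0 unfolding flip by (simp_all add: algebra_simps)
  then show ?thesis unfolding normal_schedule_at_def by blast
qed

lemma normal_schedule_at_below:
  assumes S: "sync_schedule n m f g" and c: "(i, j) \<in> grid n m" and d: "(Suc i, j) \<in> grid n m"
    and normal: "normal_schedule_at f g (i, j)"
  shows "normal_schedule_at f g (Suc i, j)"
proof -
  obtain k where k: "f (i, j) + f (Suc i, j) = 2 * pi + 2 * pi * of_int k"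
    and g: "g (Suc i, j) = - g (i, j)"
    using sync_schedule_edge[OF S c d] unfolding grid_adj_def link_angle_def by auto
  obtain k0 where k0: "f (i, j) =
      of_int (chess_sign (i, j)) * f (1,1) + pi * of_int (half_turns (i, j)) + 2 * pi * of_int k0"
    and g0: "g (i, j) = g (1,1) * chess_sign (i, j)"
    using normal unfolding normal_schedule_at_def by blast
  have flip: "chess_sign (Suc i, j) = - chess_sign (i, j)"
    "half_turns (Suc i, j) = half_turns (i, j)"
    unfolding chess_sign_def half_turns_def by auto
  have "f (Suc i, j) = of_int (chess_sign (Suc i, j)) * f (1,1) +
      pi * of_int (half_turns (Suc i, j)) + 2 * pi * of_int (k + 1 - k0 - half_turns (i, j))"
    and "g (Suc i, j) = g (1,1) * chess_sign (Suc i, j)"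
    using k k0 g g0 unfolding flip by (simp_all add: algebra_simps)
  then show ?thesis unfolding normal_schedule_at_def by blast
qed

lemma sync_schedule_normal:
  assumes S: "sync_schedule n m f g" and c: "c \<in> grid n m"
  shows "normal_schedule_at f g c"
proof -
  obtain i j where cij: "c = (i, j)" and i: "1 \<le> i" "i \<le> n" and j: "1 \<le> j" "j \<le> m"
    using c unfolding grid_def by auto
  have "normal_schedule_at f g (1, j)"
    using j(1)
  proof (induction j rule: dec_induct)
    case base
    show ?case
      unfolding normal_schedule_at_def chess_sign_def half_turns_def by (auto intro: exI[of _ 0])
  next
    case (step j)
    then show ?case using normal_schedule_at_right[OF S, of 1 j] i j unfolding grid_def by simp
  qed
  with i(1) have "normal_schedule_at f g (i, j)"
  proof (induction i rule: dec_induct)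
    case (step i)
    then show ?case using normal_schedule_at_below[OF S, of i j] i j unfolding grid_def by simp
  qed
  then show ?thesis unfolding cij .
qed

definition phase :: "(cell \<Rightarrow> real) \<Rightarrow> (cell \<Rightarrow> int) \<Rightarrow> real \<Rightarrow> real" where
  "phase f g t = f (1,1) + of_int (g (1,1)) * 2 * pi * t"

lemma phase_shift: "phase f g (t + x) = phase f g t + of_int (g (1,1)) * 2 * pi * x"
  unfolding phase_def by (simp add: algebra_simps)

lemma at_quarter_angle_iff:
  assumes S: "sync_schedule n m f g" and c: "c \<in> grid n m"
  shows "at_angle f g c (of_int L * pi / 2) t \<longleftrightarrow>
     (\<exists>q::int. phase f g t = of_int q * pi / 2 \<and> (chess_sign c * q + 2 * half_turns c - L) mod 4 = 0)"
proof -
  obtain kc :: int where fc: "f c =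
      of_int (chess_sign c) * f (1,1) + pi * of_int (half_turns c) + 2 * pi * of_int kc"
    and gc: "g c = g (1,1) * chess_sign c"
    using sync_schedule_normal[OF S c] unfolding normal_schedule_at_def by blast
  define \<sigma> where "\<sigma> = (of_int (chess_sign c) :: real)"
  have \<sigma>2: "\<sigma> * \<sigma> = 1" unfolding \<sigma>_def chess_sign_def by auto
  have pos: "f c + of_int (g c) * 2 * pi * t =
      \<sigma> * phase f g t + pi * of_int (half_turns c) + 2 * pi * of_int kc"
    unfolding fc gc phase_def \<sigma>_def by (simp add: algebra_simps)
  show ?thesis
  proof
    assume "at_angle f g c (of_int L * pi / 2) t"
    then obtain k :: int
      where k: "f c + of_int (g c) * 2 * pi * t = of_int L * pi / 2 + 2 * pi * of_int k"
      unfolding at_angle_def by blast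
    define z where "z = L + 4 * k - 2 * half_turns c - 4 * kc"
    have "\<sigma> * phase f g t = of_int z * pi / 2"
      using k pos unfolding z_def by (simp add: algebra_simps)
    then have "\<sigma> * (\<sigma> * phase f g t) = \<sigma> * (of_int z * pi / 2)" by simp
    then have "phase f g t = of_int (chess_sign c * z) * pi / 2"
      unfolding mult.assoc[symmetric] \<sigma>2 unfolding \<sigma>_def by simp
    moreover have "chess_sign c * (chess_sign c * z) + 2 * half_turns c - L = 4 * (k - kc)"
      unfolding z_def chess_sign_def by simp
    ultimately show "\<exists>q::int. phase f g t = of_int q * pi / 2 \<and>
        (chess_sign c * q + 2 * half_turns c - L) mod 4 = 0"
      by fastforce
  next
    assume "\<exists>q::int. phase f g t = of_int q * pi / 2 \<and>
      (chess_sign c * q + 2 * half_turns c - L) mod 4 = 0"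
    then obtain q z :: int where q: "phase f g t = of_int q * pi / 2"
      and z: "chess_sign c * q + 2 * half_turns c - L = 4 * z"
      by (metis dvd_def mod_0_imp_dvd)
    have \<sigma>q: "\<sigma> * of_int q = of_int L - 2 * of_int (half_turns c) + 4 * of_int z"
      using arg_cong[OF z, of real_of_int] unfolding \<sigma>_def by simp
    have "f c + of_int (g c) * 2 * pi * t =
        (\<sigma> * of_int q) * pi / 2 + pi * of_int (half_turns c) + 2 * pi * of_int kc"
      unfolding pos q by simp
    also have "\<dots> = of_int L * pi / 2 + 2 * pi * of_int (z + kc)"
      unfolding \<sigma>q by (simp add: field_simps)
    finally show "at_angle f g c (of_int L * pi / 2) t" unfolding at_angle_def by blast
  qed
qed

lemma at_link_iff_matched:
  assumes S: "sync_schedule n m f g" and c: "c \<in> grid n m" and d: "d \<in> grid n m"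
  shows "(grid_adj c d \<and> at_angle f g c (link_angle c d) t) \<longleftrightarrow>
         (\<exists>q::int. phase f g t = of_int q * pi / 2 \<and> grid_matching n m q c = d \<and> d \<noteq> c)"
proof
  assume "grid_adj c d \<and> at_angle f g c (link_angle c d) t"
  then have adj: "grid_adj c d" and at: "at_angle f g c (of_int (link_index c d) * pi / 2) t"
    unfolding link_angle_link_index by auto
  obtain q :: int where q: "phase f g t = of_int q * pi / 2"
    and index: "(chess_sign c * q + 2 * half_turns c - link_index c d) mod 4 = 0"
    using iffD1[OF at_quarter_angle_iff[OF S c] at] by (elim exE conjE)
  have "grid_matching n m q c = d" using iffD2[OF grid_matching_eq_neighbour_iff[OF c d adj] index] .
  moreover have "d \<noteq> c" using adj unfolding grid_adj_def by auto
  ultimately show "\<exists>q::int. phase f g t = of_int q * pi / 2 \<and> grid_matching n m q c = d \<and> d \<noteq> c"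
    using q by blast
next
  assume "\<exists>q::int. phase f g t = of_int q * pi / 2 \<and> grid_matching n m q c = d \<and> d \<noteq> c"
  then obtain q :: int where q: "phase f g t = of_int q * pi / 2"
    and matched: "grid_matching n m q c = d" and "d \<noteq> c"
    by blast
  then have adj: "grid_adj c d" using grid_matching_adj by blast
  have index: "(chess_sign c * q + 2 * half_turns c - link_index c d) mod 4 = 0"
    using iffD1[OF grid_matching_eq_neighbour_iff[OF c d adj] matched] .
  have "at_angle f g c (of_int (link_index c d) * pi / 2) t"
    by (rule iffD2[OF at_quarter_angle_iff[OF S c]]) (intro exI[of _ q] conjI q index)
  then show "grid_adj c d \<and> at_angle f g c (link_angle c d) t"
    unfolding link_angle_link_index using adj by simp
qed

definition matching_at :: "nat \<Rightarrow> nat \<Rightarrow> (cell \<Rightarrow> real) \<Rightarrow> (cell \<Rightarrow> int) \<Rightarrow> real \<Rightarrow> cell \<Rightarrow> cell" where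
  "matching_at n m f g t c =
     (if \<exists>q::int. phase f g t = of_int q * pi / 2
      then grid_matching n m (THE q::int. phase f g t = of_int q * pi / 2) c else c)"

lemma matching_at_quarter:
  assumes "phase f g t = of_int q * pi / 2"
  shows "matching_at n m f g t = grid_matching n m q"
proof -
  have "(THE q::int. phase f g t = of_int q * pi / 2) = q"
    using assms by (intro the_equality) simp_all
  then show ?thesis using assms unfolding matching_at_def by auto
qed

lemma matching_at_in_grid: "c \<in> grid n m \<Longrightarrow> matching_at n m f g t c \<in> grid n m"
  unfolding matching_at_def using grid_matching_in_grid by auto

lemma matching_at_involutive: "c \<in> grid n m \<Longrightarrow> matching_at n m f g t (matching_at n m f g t c) = c"
  unfolding matching_at_def using grid_matching_involutive by auto

lemma matching_at_inj:
  "c \<in> grid n m \<Longrightarrow> d \<in> grid n m \<Longrightarrow> matching_at n m f g t c = matching_at n m f g t d \<Longrightarrow> c = d"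
  by (metis matching_at_involutive)

lemma at_link_iff_matching_at:
  assumes S: "sync_schedule n m f g" and c: "c \<in> grid n m" and d: "d \<in> grid n m"
  shows "(grid_adj c d \<and> at_angle f g c (link_angle c d) t) \<longleftrightarrow> matching_at n m f g t c = d \<and> d \<noteq> c"
proof -
  have "(\<exists>q::int. phase f g t = of_int q * pi / 2 \<and> grid_matching n m q c = d \<and> d \<noteq> c) \<longleftrightarrow>
      matching_at n m f g t c = d \<and> d \<noteq> c"
  proof (cases "\<exists>q::int. phase f g t = of_int q * pi / 2")
    case True
    then obtain q :: int where q: "phase f g t = of_int q * pi / 2" by blast
    then have "phase f g t = of_int q' * pi / 2 \<longleftrightarrow> q' = q" for q' :: int by auto
    then show ?thesis using matching_at_quarter[OF q] by auto
  qed (simp add: matching_at_def)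
  then show ?thesis using at_link_iff_matched[OF S c d] by blast
qed

section \<open>Motion of the robots\<close>

definition config_in_grid :: "nat \<Rightarrow> nat \<Rightarrow> config \<Rightarrow> bool" where
  "config_in_grid n m s \<longleftrightarrow> (\<forall>r c. s r = Some c \<longrightarrow> r \<in> grid n m \<and> c \<in> grid n m)"

lemma config_in_gridD: "config_in_grid n m s \<Longrightarrow> s r = Some c \<Longrightarrow> r \<in> grid n m \<and> c \<in> grid n m"
  unfolding config_in_grid_def by blast

lemma occupiedI: "config_in_grid n m s \<Longrightarrow> s r = Some c \<Longrightarrow> occupied n m s c"
  unfolding occupied_def config_in_grid_def by blast

lemma remove_left_SomeD: "remove_left S lv k s r = Some c \<Longrightarrow> s r = Some c"
  unfolding remove_left_def by (simp split: if_splits)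

lemma step_None: "s r = None \<Longrightarrow> step n m f g t s r = None"
  unfolding step_def by simp

lemma step_SomeE:
  assumes "step n m f g t s r = Some c"
  obtains c0 where "s r = Some c0" "c = c0 \<or> moves_to n m f g t s c0 c"
  using assms unfolding step_def by (auto split: option.splits if_splits intro: someI_ex)

lemma config_in_grid_run: "config_in_grid n m (run n m f g S lv k)"
proof (induction k)
  case 0
  show ?case unfolding config_in_grid_def by (simp add: remove_left_def)
next
  case (Suc k)
  show ?case unfolding config_in_grid_def
  proof (intro allI impI)
    fix r c assume "run n m f g S lv (Suc k) r = Some c"
    then have "step n m f g (ev n m f g k) (run n m f g S lv k) r = Some c"
      by (auto dest: remove_left_SomeD)
    then obtain c0 where "run n m f g S lv k r = Some c0"
      and "c = c0 \<or> moves_to n m f g (ev n m f g k) (run n m f g S lv k) c0 c"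
      by (rule step_SomeE)
    then show "r \<in> grid n m \<and> c \<in> grid n m"
      using config_in_gridD[OF Suc.IH] unfolding moves_to_def by blast
  qed
qed

lemma step_Some:
  assumes S: "sync_schedule n m f g" and s: "config_in_grid n m s" and sr: "s r = Some c"
  shows "step n m f g t s r =
    Some (if matching_at n m f g t c \<noteq> c \<and> \<not> occupied n m s (matching_at n m f g t c)
          then matching_at n m f g t c else c)"
proof -
  have c: "c \<in> grid n m" using config_in_gridD[OF s sr] by blast
  have moves: "moves_to n m f g t s c d \<longleftrightarrow>
      matching_at n m f g t c = d \<and> d \<noteq> c \<and> \<not> occupied n m s d" for d
    unfolding moves_to_def using at_link_iff_matching_at[OF S c] matching_at_in_grid[OF c] by blast
  show ?thesis
  proof (cases "matching_at n m f g t c \<noteq> c \<and> \<not> occupied n m s (matching_at n m f g t c)")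
    case True
    then have "\<exists>d. moves_to n m f g t s c d"
      "(SOME d. moves_to n m f g t s c d) = matching_at n m f g t c"
      using moves by (auto intro: some_equality)
    then show ?thesis unfolding step_def using sr True by simp
  next
    case False
    then show ?thesis unfolding step_def using sr moves by auto
  qed
qed

lemma meet_iff:
  assumes S: "sync_schedule n m f g"
  shows "meet n m f g t s \<longleftrightarrow> (\<exists>c\<in>grid n m. occupied n m s c \<and>
      matching_at n m f g t c \<noteq> c \<and> occupied n m s (matching_at n m f g t c))"
proof
  assume "meet n m f g t s"
  then obtain c d where c: "c \<in> grid n m" and d: "d \<in> grid n m"
    and link: "grid_adj c d \<and> at_angle f g c (link_angle c d) t"
    and "occupied n m s c" "occupied n m s d"
    unfolding meet_def by blast
  moreover have "matching_at n m f g t c = d \<and> d \<noteq> c"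
    using iffD1[OF at_link_iff_matching_at[OF S c d] link] .
  ultimately show "\<exists>c\<in>grid n m. occupied n m s c \<and>
      matching_at n m f g t c \<noteq> c \<and> occupied n m s (matching_at n m f g t c)"
    by blast
next
  assume "\<exists>c\<in>grid n m. occupied n m s c \<and>
      matching_at n m f g t c \<noteq> c \<and> occupied n m s (matching_at n m f g t c)"
  then obtain c where c: "c \<in> grid n m" and "occupied n m s c"
    and moved: "matching_at n m f g t c \<noteq> c" and "occupied n m s (matching_at n m f g t c)"
    by blast
  moreover have "grid_adj c (matching_at n m f g t c) \<and>
      at_angle f g c (link_angle c (matching_at n m f g t c)) t"
    using at_link_iff_matching_at[OF S c matching_at_in_grid[OF c]] moved by blast
  ultimately show "meet n m f g t s"
    unfolding meet_def using matching_at_in_grid[OF c] by blast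
qed

lemma step_without_meet:
  assumes S: "sync_schedule n m f g" and s: "config_in_grid n m s" and no_meet: "\<not> meet n m f g t s"
  shows "step n m f g t s r = map_option (matching_at n m f g t) (s r)"
proof (cases "s r")
  case (Some c)
  have "occupied n m s c" "c \<in> grid n m" using occupiedI[OF s Some] config_in_gridD[OF s Some] by auto
  then have "matching_at n m f g t c \<noteq> c \<Longrightarrow> \<not> occupied n m s (matching_at n m f g t c)"
    using no_meet unfolding meet_iff[OF S] by blast
  then show ?thesis using step_Some[OF S s Some] Some by (cases "matching_at n m f g t c = c") auto
qed (simp add: step_None)

lemma step_injective:
  assumes S: "sync_schedule n m f g" and s: "config_in_grid n m s"
    and inj: "\<And>r1 r2 c. s r1 = Some c \<Longrightarrow> s r2 = Some c \<Longrightarrow> r1 = r2"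
    and r1: "step n m f g t s r1 = Some c" and r2: "step n m f g t s r2 = Some c"
  shows "r1 = r2"
proof -
  let ?M = "matching_at n m f g t"
  have moved_or_stayed: "c = c0 \<or> c = ?M c0 \<and> \<not> occupied n m s c"
    if "s r = Some c0" "step n m f g t s r = Some c" for r c0
    using step_Some[OF S s that(1), of t] that(2)
    by (cases "?M c0 \<noteq> c0 \<and> \<not> occupied n m s (?M c0)") auto
  obtain c1 c2 where c1: "s r1 = Some c1" and c2: "s r2 = Some c2"
    using r1 r2 by (cases "s r1"; cases "s r2") (auto simp: step_None)
  have grid: "c1 \<in> grid n m" "c2 \<in> grid n m" using config_in_gridD[OF s] c1 c2 by blast+
  have "occupied n m s c1" "occupied n m s c2" using occupiedI[OF s] c1 c2 by blast+
  then have "c1 = c2"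
    using moved_or_stayed[OF c1 r1] moved_or_stayed[OF c2 r2] matching_at_inj[OF grid, of f g t]
    by blast
  then show ?thesis using inj c1 c2 by simp
qed

lemma run_injective:
  assumes S: "sync_schedule n m f g"
  shows "run n m f g S0 lv k r1 = Some c \<Longrightarrow> run n m f g S0 lv k r2 = Some c \<Longrightarrow> r1 = r2"
proof (induction k arbitrary: r1 r2 c)
  case 0
  then show ?case by (auto simp: remove_left_def split: if_splits)
next
  case (Suc k)
  then have "step n m f g (ev n m f g k) (run n m f g S0 lv k) r1 = Some c"
    "step n m f g (ev n m f g k) (run n m f g S0 lv k) r2 = Some c"
    by (auto dest: remove_left_SomeD)
  then show ?case
    using step_injective[OF S config_in_grid_run[of n m f g S0 lv k]] Suc.IH by blast
qed

lemma run_alive: "r \<in> grid n m \<Longrightarrow> r \<notin> S0 \<Longrightarrow> run n m f g S0 lv k r \<noteq> None"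
  by (induction k) (auto simp: remove_left_def step_def split: option.splits)

lemma run_Suc_after_leaving:
  assumes S: "sync_schedule n m f g" and gone: "\<And>r. r \<in> S0 \<Longrightarrow> lv r \<le> k"
    and no_meet: "\<not> meet n m f g (ev n m f g k) (run n m f g S0 lv k)"
  shows "run n m f g S0 lv (Suc k) r =
    map_option (matching_at n m f g (ev n m f g k)) (run n m f g S0 lv k r)"
proof (cases "r \<in> S0")
  case True
  then have "run n m f g S0 lv k r = None" using gone by (cases k) (simp_all add: remove_left_def)
  then show ?thesis by (simp add: remove_left_def step_None)
next
  case False
  then show ?thesis
    using step_without_meet[OF S config_in_grid_run no_meet] by (simp add: remove_left_def)
qed

section \<open>Robots on a diagonal starve\<close>

text \<open>Robots on pairwise non-attacking rook squares never meet, since matched circles share a row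
  or a column; and the matchings keep them non-attacking.\<close>

definition rook_config :: "config \<Rightarrow> bool" where
  "rook_config s \<longleftrightarrow> (\<forall>r1 r2 c1 c2. r1 \<noteq> r2 \<longrightarrow> s r1 = Some c1 \<longrightarrow> s r2 = Some c2 \<longrightarrow>
     fst c1 \<noteq> fst c2 \<and> snd c1 \<noteq> snd c2)"

lemma rook_config_no_meet:
  assumes S: "sync_schedule n m f g" and s: "config_in_grid n m s" and rook: "rook_config s"
  shows "\<not> meet n m f g t s"
proof
  assume "meet n m f g t s"
  then obtain c r1 r2 where c: "c \<in> grid n m" and moved: "matching_at n m f g t c \<noteq> c"
    and r1: "s r1 = Some c" and r2: "s r2 = Some (matching_at n m f g t c)"
    unfolding meet_iff[OF S] occupied_def by blast
  have "grid_adj c (matching_at n m f g t c)"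
    using at_link_iff_matching_at[OF S c matching_at_in_grid[OF c]] moved by blast
  moreover have "r1 \<noteq> r2" using r1 r2 moved by auto
  ultimately show False using rook r1 r2 unfolding rook_config_def grid_adj_def by force
qed

lemma rook_config_map_matching:
  assumes s: "config_in_grid n m s" and rook: "rook_config s"
  shows "rook_config (\<lambda>r. map_option (matching_at n m f g t) (s r))"
  unfolding rook_config_def
proof (intro allI impI)
  fix r1 r2 c1 c2
  assume "r1 \<noteq> r2" and "map_option (matching_at n m f g t) (s r1) = Some c1"
    and "map_option (matching_at n m f g t) (s r2) = Some c2"
  then obtain d1 d2 where d: "s r1 = Some d1" "s r2 = Some d2"
    and c: "c1 = matching_at n m f g t d1" "c2 = matching_at n m f g t d2"
    and apart: "fst d1 \<noteq> fst d2" "snd d1 \<noteq> snd d2"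
    using rook unfolding rook_config_def by fastforce
  have "d1 \<in> grid n m" "d2 \<in> grid n m" using config_in_gridD[OF s] d by blast+
  then show "fst c1 \<noteq> fst c2 \<and> snd c1 \<noteq> snd c2"
    using grid_matching_separated[OF _ _ apart] apart unfolding c matching_at_def by auto
qed

lemma rook_config_run:
  assumes S: "sync_schedule n m f g" and rook0: "rook_config (run n m f g S0 lv 0)"
  shows "rook_config (run n m f g S0 lv k)"
proof (induction k)
  case (Suc k)
  let ?s = "run n m f g S0 lv k"
  have "step n m f g (ev n m f g k) ?s = (\<lambda>r. map_option (matching_at n m f g (ev n m f g k)) (?s r))"
    using rook_config_no_meet[OF S config_in_grid_run Suc.IH]
    by (intro ext step_without_meet[OF S config_in_grid_run])
  then have "rook_config (step n m f g (ev n m f g k) ?s)"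
    using rook_config_map_matching[OF config_in_grid_run Suc.IH] by simp
  then show ?case unfolding rook_config_def run.simps by (blast dest: remove_left_SomeD)
qed (rule rook0)

definition diagonal :: "nat \<Rightarrow> nat \<Rightarrow> cell set" where
  "diagonal n m = (\<lambda>i. (i, i)) ` {1..min n m}"

lemma diagonal_subset_grid: "diagonal n m \<subseteq> grid n m"
  unfolding diagonal_def grid_def by auto

lemma card_diagonal: "card (diagonal n m) = min n m"
  unfolding diagonal_def by (simp add: card_image inj_on_def)

lemma card_grid: "card (grid n m) = n * m"
  unfolding grid_def by (simp add: card_cartesian_product)

lemma finite_grid: "finite (grid n m)"
  unfolding grid_def by simp

lemma starvation_on_diagonal:
  assumes S: "sync_schedule n m f g" and D: "D \<subseteq> diagonal n m"
  shows "starvation n m f g (grid n m - D) (\<lambda>_. 0)"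
proof -
  have "rook_config (run n m f g (grid n m - D) (\<lambda>_. 0) 0)"
    using D diagonal_subset_grid[of n m]
    unfolding rook_config_def diagonal_def by (auto simp: remove_left_def split: if_splits)
  then show ?thesis
    unfolding starvation_def using rook_config_no_meet[OF S config_in_grid_run rook_config_run[OF S]]
    by blast
qed

lemma not_resilient_to:
  assumes S: "sync_schedule n m f g" and "n * m - min n m \<le> k" and "k \<le> n * m"
  shows "\<not> resilient_to n m f g k"
proof -
  have "n * m - k \<le> card (diagonal n m)" using assms(2) card_diagonal[of n m] by linarith
  then obtain D where D: "D \<subseteq> diagonal n m" "card D = n * m - k"
    by (meson obtain_subset_with_card_n)
  have "D \<subseteq> grid n m" "finite D"
    using D(1) diagonal_subset_grid finite_grid by (blast, meson finite_subset)
  then have "card (grid n m - D) = k"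
    using card_Diff_subset[of D "grid n m"] D(2) card_grid[of n m] assms(3) by simp
  then show ?thesis
    unfolding resilient_to_def using starvation_on_diagonal[OF S D(1)] by blast
qed

section \<open>Event times\<close>

lemma event_times_iff:
  assumes S: "sync_schedule n m f g"
  shows "t \<in> event_times n m f g \<longleftrightarrow> 0 \<le> t \<and> (\<exists>c\<in>grid n m. matching_at n m f g t c \<noteq> c)"
proof
  assume "t \<in> event_times n m f g"
  then obtain c d where "0 \<le> t" and c: "c \<in> grid n m" and d: "d \<in> grid n m"
    and "grid_adj c d \<and> at_angle f g c (link_angle c d) t"
    unfolding event_times_def by blast
  then show "0 \<le> t \<and> (\<exists>c\<in>grid n m. matching_at n m f g t c \<noteq> c)"
    using at_link_iff_matching_at[OF S c d, where t = t] by blast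
next
  assume "0 \<le> t \<and> (\<exists>c\<in>grid n m. matching_at n m f g t c \<noteq> c)"
  then obtain c where "0 \<le> t" and c: "c \<in> grid n m" and "matching_at n m f g t c \<noteq> c" by blast
  then show "t \<in> event_times n m f g"
    using at_link_iff_matching_at[OF S c matching_at_in_grid[OF c], where t = t]
      matching_at_in_grid[OF c]
    unfolding event_times_def by blast
qed

lemma event_time_quarter:
  assumes S: "sync_schedule n m f g" and t: "t \<in> event_times n m f g"
  obtains q :: int where "phase f g t = of_int q * pi / 2"
  using t unfolding event_times_iff[OF S] matching_at_def by (auto split: if_splits)

lemma sync_schedule_direction:
  assumes S: "sync_schedule n m f g" and t: "t \<in> event_times n m f g"
  shows "g (1,1) = 1 \<or> g (1,1) = -1"
proof -
  have "(1, 1) \<in> grid n m" using t unfolding event_times_def grid_def by auto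
  then show ?thesis using S unfolding sync_schedule_def by blast
qed

lemma event_times_lattice:
  assumes S: "sync_schedule n m f g" and e: "e \<in> event_times n m f g" and t: "t \<in> event_times n m f g"
  shows "\<exists>z::int. t = e + of_int z * (1 / 4)"
proof -
  obtain q q' :: int
    where q: "phase f g e = of_int q * pi / 2" and q': "phase f g t = of_int q' * pi / 2"
    using event_time_quarter[OF S e] event_time_quarter[OF S t] by metis
  have "of_int (g (1,1)) * (t - e) * (2 * pi) = (of_int q' - of_int q) / 4 * (2 * pi)"
    using q q' unfolding phase_def by (simp add: algebra_simps)
  then have "of_int (g (1,1)) * (t - e) = (of_int q' - of_int q) / 4"
    using pi_gt_zero by simp
  then have "t = e + of_int (g (1,1) * (q' - q)) * (1 / 4)"
    using sync_schedule_direction[OF S e] by (auto simp: algebra_simps)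
  then show ?thesis by blast
qed

lemma event_times_periodic:
  assumes S: "sync_schedule n m f g" and t: "t \<in> event_times n m f g"
  shows "t + 1 \<in> event_times n m f g"
proof -
  obtain q where q: "phase f g t = of_int q * pi / 2" using event_time_quarter[OF S t] .
  have "phase f g (t + 1) = of_int (q + 4 * g (1,1)) * pi / 2"
    unfolding phase_shift q by (simp add: algebra_simps)
  then have "matching_at n m f g (t + 1) = grid_matching n m (q + 4 * g (1,1))"
    by (rule matching_at_quarter)
  also have "\<dots> = matching_at n m f g t"
    unfolding grid_matching_periodic matching_at_quarter[OF q] ..
  finally have "matching_at n m f g (t + 1) = matching_at n m f g t" .
  then show ?thesis using t event_times_iff[OF S] by simp
qed

lemma cInf_lattice_attained:
  fixes X :: "real set"
  assumes x0: "x0 \<in> X" and lb: "\<And>x. x \<in> X \<Longrightarrow> lb \<le> x" and d: "d > 0"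
    and lattice: "\<And>x. x \<in> X \<Longrightarrow> \<exists>z::int. x = b + of_int z * d"
  shows "Inf X \<in> X"
proof -
  define Y where "Y = {x \<in> X. x \<le> x0}"
  have "Y \<subseteq> (\<lambda>z::int. b + of_int z * d) ` {\<lfloor>(lb - b) / d\<rfloor> .. \<lceil>(x0 - b) / d\<rceil>}"
  proof
    fix x assume "x \<in> Y"
    then have x: "x \<in> X" "x \<le> x0" unfolding Y_def by auto
    obtain z :: int where z: "x = b + of_int z * d" using lattice[OF x(1)] by blast
    have "(lb - b) / d \<le> of_int z" "of_int z \<le> (x0 - b) / d"
      using lb[OF x(1)] x(2) d unfolding z by (simp_all add: field_simps)
    then show "x \<in> (\<lambda>z::int. b + of_int z * d) ` {\<lfloor>(lb - b) / d\<rfloor> .. \<lceil>(x0 - b) / d\<rceil>}"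
      unfolding z by (intro imageI) (simp add: floor_le_iff le_ceiling_iff)
  qed
  then have Y: "finite Y" by (rule finite_subset) simp
  have x0Y: "x0 \<in> Y" using x0 unfolding Y_def by simp
  have minY: "Min Y \<in> X" "Min Y \<le> x0" using Min_in[OF Y] Min_le[OF Y x0Y] x0Y unfolding Y_def by auto
  have "Min Y \<le> x" if "x \<in> X" for x
  proof (cases "x \<le> x0")
    case True then show ?thesis using Min_le[OF Y] that unfolding Y_def by simp
  qed (use minY in simp)
  then have "Inf X = Min Y" using minY(1) by (intro cInf_eq_minimum)
  then show ?thesis using minY(1) by simp
qed

lemma event_times_bdd_below: "bdd_below (event_times n m f g)"
  unfolding event_times_def by (intro bdd_belowI[of _ 0]) simp

lemma next_event:
  assumes S: "sync_schedule n m f g" and e: "e \<in> event_times n m f g" and t: "t \<in> event_times n m f g"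
  shows "Inf {x \<in> event_times n m f g. t < x} \<in> event_times n m f g \<and>
         t < Inf {x \<in> event_times n m f g. t < x}"
proof -
  have "Inf {x \<in> event_times n m f g. t < x} \<in> {x \<in> event_times n m f g. t < x}"
    using event_times_periodic[OF S t] event_times_lattice[OF S e]
    by (intro cInf_lattice_attained[of "t + 1" _ t "1 / 4" e]) auto
  then show ?thesis by simp
qed

text \<open>The hypothesis that some event e exists is needed: on the 1 x 1 grid there are no events and
  ev is the infimum of the empty set.\<close>

lemma ev_in_event_times:
  assumes S: "sync_schedule n m f g" and e: "e \<in> event_times n m f g"
  shows "ev n m f g k \<in> event_times n m f g"
proof (induction k)
  case 0
  have "Inf (event_times n m f g) \<in> event_times n m f g"
    using e event_times_lattice[OF S e] unfolding event_times_def
    by (intro cInf_lattice_attained[of e _ 0 "1 / 4" e]) auto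
  then show ?case by simp
qed (use next_event[OF S e] in simp)

lemma ev_less_Suc:
  assumes S: "sync_schedule n m f g" and e: "e \<in> event_times n m f g"
  shows "ev n m f g k < ev n m f g (Suc k)"
  using next_event[OF S e ev_in_event_times[OF S e]] by simp

lemma ev_Suc_le:
  assumes "t \<in> event_times n m f g" and "ev n m f g k < t"
  shows "ev n m f g (Suc k) \<le> t"
  using assms by (auto intro: cInf_lower bdd_below_mono[OF event_times_bdd_below])

lemma ev_mono:
  assumes S: "sync_schedule n m f g" and e: "e \<in> event_times n m f g" and "k \<le> k'"
  shows "ev n m f g k \<le> ev n m f g k'"
  using lift_Suc_mono_le[of "ev n m f g", OF less_imp_le[OF ev_less_Suc[OF S e]] assms(3)] .

lemma ev_offset:
  assumes S: "sync_schedule n m f g" and e: "e \<in> event_times n m f g" and "K \<le> k"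
  obtains j :: nat where "ev n m f g k = ev n m f g K + real j / 4"
proof -
  obtain z :: int where z: "ev n m f g k = ev n m f g K + of_int z * (1 / 4)"
    using event_times_lattice[OF S ev_in_event_times[OF S e] ev_in_event_times[OF S e]] by blast
  then have "0 \<le> z" using ev_mono[OF S e assms(3)] by simp
  then have "ev n m f g k = ev n m f g K + real (nat z) / 4" using z by simp
  then show thesis by (rule that)
qed

lemma ev_grows:
  assumes S: "sync_schedule n m f g" and e: "e \<in> event_times n m f g"
  shows "ev n m f g K + real j / 4 \<le> ev n m f g (K + j)"
proof (induction j)
  case (Suc j)
  obtain i :: nat where i: "ev n m f g (Suc (K + j)) = ev n m f g (K + j) + real i / 4"
    using ev_offset[OF S e le_SucI[OF order.refl]] by blast
  then have "1 \<le> real i" using ev_less_Suc[OF S e, of "K + j"] by (cases i) auto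
  then show ?case using Suc.IH i unfolding add_Suc_right by (simp del: ev.simps add: field_simps)
qed simp

text \<open>The recursion defining ev enumerates all event times, since consecutive events are at
  least a quarter apart.\<close>

lemma event_time_is_ev:
  assumes S: "sync_schedule n m f g" and t: "t \<in> event_times n m f g" and "ev n m f g K \<le> t"
  shows "\<exists>k\<ge>K. ev n m f g k = t"
proof -
  have "t < ev n m f g (K + j) \<Longrightarrow> \<exists>k\<ge>K. ev n m f g k = t" for j
  proof (induction j)
    case (Suc j)
    show ?case
    proof (cases "t < ev n m f g (K + j)")
      case False
      then have "\<not> ev n m f g (K + j) < t"
        using ev_Suc_le[OF t, of "K + j"] Suc.prems unfolding add_Suc_right by linarith
      then show ?thesis using False by (intro exI[of _ "K + j"]) auto
    qed (rule Suc.IH)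
  qed (use assms(3) in simp)
  moreover obtain j :: nat where "4 * (t - ev n m f g K) < real j"
    using reals_Archimedean2 by blast
  then have "t < ev n m f g (K + j)" using ev_grows[OF S t, of K j] by simp
  ultimately show ?thesis by blast
qed

lemma exists_at_angle:
  assumes S: "sync_schedule n m f g" and c: "c \<in> grid n m"
  shows "\<exists>t\<ge>0. at_angle f g c \<phi> t"
proof -
  have gc: "g c = 1 \<or> g c = -1" using S c unfolding sync_schedule_def by auto
  define t0 where "t0 = (\<phi> - f c) / (of_int (g c) * 2 * pi)"
  have t0: "of_int (g c) * 2 * pi * t0 = \<phi> - f c" using gc unfolding t0_def by auto
  define N where "N = nat \<lceil>- t0\<rceil>"
  have "f c + of_int (g c) * 2 * pi * (t0 + of_nat N) = \<phi> + 2 * pi * of_int (g c * int N)"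
    using t0 by (simp add: algebra_simps)
  moreover have "0 \<le> t0 + of_nat N" unfolding N_def by linarith
  ultimately show ?thesis unfolding at_angle_def by blast
qed

lemma event_times_nonempty:
  assumes S: "sync_schedule n m f g" and "1 \<le> n" "1 \<le> m" and "\<not> (n = 1 \<and> m = 1)"
  obtains e where "e \<in> event_times n m f g"
proof -
  obtain c d where c: "c \<in> grid n m" and d: "d \<in> grid n m" and adj: "grid_adj c d"
  proof (cases "2 \<le> m")
    case True
    then show ?thesis using that[of "(1,1)" "(1,2)"] assms unfolding grid_def grid_adj_def by auto
  next
    case False
    then show ?thesis using that[of "(1,1)" "(2,1)"] assms unfolding grid_def grid_adj_def by auto
  qed
  obtain t where "0 \<le> t" "at_angle f g c (link_angle c d) t" using exists_at_angle[OF S c] by blast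
  then show thesis using that c d adj unfolding event_times_def by blast
qed

section \<open>Two robots in a line eventually meet\<close>

primrec matching_orbit :: "nat \<Rightarrow> nat \<Rightarrow> int \<Rightarrow> int \<Rightarrow> cell \<Rightarrow> nat \<Rightarrow> cell" where
  "matching_orbit n m q0 s c 0 = c"
| "matching_orbit n m q0 s c (Suc j) = grid_matching n m (q0 + s * int j) (matching_orbit n m q0 s c j)"

lemma matching_orbit_in_grid: "c \<in> grid n m \<Longrightarrow> matching_orbit n m q0 s c j \<in> grid n m"
  by (induction j) (simp_all add: grid_matching_in_grid)

lemma matching_orbit_inj:
  assumes "c1 \<in> grid n m" "c2 \<in> grid n m" "c1 \<noteq> c2"
  shows "matching_orbit n m q0 s c1 j \<noteq> matching_orbit n m q0 s c2 j"
proof (induction j)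
  case (Suc j)
  then show ?case
    using grid_matching_inj[OF matching_orbit_in_grid[OF assms(1)] matching_orbit_in_grid[OF assms(2)]]
    by auto
qed (use assms(3) in simp)

lemma matching_orbit_same_row:
  "fst c1 = fst c2 \<Longrightarrow> fst (matching_orbit n m q0 s c1 j) = fst (matching_orbit n m q0 s c2 j)"
proof (induction j)
  case (Suc j)
  then show ?case
    by (cases "even (q0 + s * int j)") (simp_all add: grid_matching_even grid_matching_odd)
qed simp

lemma matching_orbit_transpose:
  "matching_orbit n m q0 s (prod.swap c) j = prod.swap (matching_orbit m n (3 - q0) (- s) c j)"
proof (induction j)
  case (Suc j)
  have "3 - q0 + - s * int j = 3 - (q0 + s * int j)" by simp
  then show ?case using Suc.IH by (simp only: matching_orbit.simps grid_matching_transpose)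
qed simp

lemma matching_orbit_constant:
  assumes fixed: "\<And>i c. a \<le> i \<Longrightarrow> i < b \<Longrightarrow> c \<in> grid n m \<Longrightarrow> grid_matching n m (q0 + s * int i) c = c"
    and c: "c \<in> grid n m" and "a \<le> b"
  shows "matching_orbit n m q0 s c b = matching_orbit n m q0 s c a"
  using \<open>a \<le> b\<close>
proof (induction b rule: dec_induct)
  case (step b)
  then show ?case using fixed[OF _ _ matching_orbit_in_grid[OF c]] by simp
qed simp

text \<open>Two robots in the same row stay in a common row, and every second quarter turn their columns
  undergo the same swap of the path 1..m, with alternating parity; by the one-dimensional
  argument they are eventually matched with each other.\<close>

lemma matching_orbits_meet_in_row:
  assumes s: "odd s" and c1: "c1 \<in> grid n m" and c2: "c2 \<in> grid n m"
    and ne: "c1 \<noteq> c2" and row: "fst c1 = fst c2"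
  shows "\<exists>j. grid_matching n m (q0 + s * int j) (matching_orbit n m q0 s c1 j) =
    matching_orbit n m q0 s c2 j"
proof -
  define j1 :: nat where "j1 = (if even q0 then 0 else 1)"
  define Q where "Q t = q0 + s * int (j1 + 2 * t)" for t
  have Q_even: "even (Q t)" for t
    using s unfolding Q_def j1_def by (cases "even q0") (simp_all add: algebra_simps)
  have Q_odd: "odd (Q t + s)" for t using Q_even[of t] s by simp
  have orbit_2: "matching_orbit n m q0 s c (j1 + 2 * Suc t) =
      grid_matching n m (Q t + s) (grid_matching n m (Q t) (matching_orbit n m q0 s c (j1 + 2 * t)))"
    for c t
  proof -
    have "j1 + 2 * Suc t = Suc (Suc (j1 + 2 * t))" "q0 + s * int (Suc (j1 + 2 * t)) = Q t + s"
      unfolding Q_def by (simp_all add: algebra_simps)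
    then show ?thesis unfolding Q_def by (simp add: add.assoc)
  qed
  define x where "x t = snd (matching_orbit n m q0 s c1 (j1 + 2 * t))" for t
  define y where "y t = snd (matching_orbit n m q0 s c2 (j1 + 2 * t))" for t
  define pp where "pp t = swap_parity (Q t)" for t
  have x: "x (Suc t) = path_swap (pp t) m (x t)" and y: "y (Suc t) = path_swap (pp t) m (y t)" for t
    unfolding x_def y_def pp_def orbit_2 grid_matching_odd[OF Q_odd] grid_matching_even[OF Q_even]
    by simp_all
  have pp: "pp t < 2" "pp (Suc t) = 1 - pp t" for t
    unfolding pp_def using swap_parity_less_2 swap_parity_flip[OF s, of "Q t"]
    by (simp_all add: Q_def algebra_simps)
  have "matching_orbit n m q0 s c1 j1 \<in> grid n m" "matching_orbit n m q0 s c2 j1 \<in> grid n m"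
    using matching_orbit_in_grid c1 c2 by auto
  then have x0: "1 \<le> x 0" "x 0 \<le> m" and y0: "1 \<le> y 0" "y 0 \<le> m"
    unfolding x_def y_def grid_def by (auto simp: mem_Times_iff)
  have "x 0 \<noteq> y 0"
    using matching_orbit_inj[OF c1 c2 ne, of q0 s j1] matching_orbit_same_row[OF row, of n m q0 s j1]
    unfolding x_def y_def by (simp add: prod_eq_iff)
  then obtain t where t: "path_swap (pp t) m (x t) = y t"
    using swap_orbits_meet[OF x x0 y y0 pp] by blast
  have "grid_matching n m (Q t) (matching_orbit n m q0 s c1 (j1 + 2 * t)) =
      matching_orbit n m q0 s c2 (j1 + 2 * t)"
    using t matching_orbit_same_row[OF row]
    unfolding grid_matching_even[OF Q_even] x_def y_def pp_def by (simp add: prod_eq_iff)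
  then show ?thesis unfolding Q_def by blast
qed

lemma matching_orbits_meet:
  assumes s: "odd s" and c1: "c1 \<in> grid n m" and c2: "c2 \<in> grid n m"
    and ne: "c1 \<noteq> c2" and line: "fst c1 = fst c2 \<or> snd c1 = snd c2"
  shows "\<exists>j. grid_matching n m (q0 + s * int j) (matching_orbit n m q0 s c1 j) =
    matching_orbit n m q0 s c2 j"
  using line
proof
  \<comment> \<open>transposing the grid turns a common column into a common row\<close>
  assume "snd c1 = snd c2"
  moreover have "prod.swap c1 \<in> grid m n" "prod.swap c2 \<in> grid m n" "prod.swap c1 \<noteq> prod.swap c2"
    using c1 c2 ne unfolding grid_def by auto
  ultimately obtain j where j: "grid_matching m n (3 - q0 + - s * int j)
      (matching_orbit m n (3 - q0) (- s) (prod.swap c1) j) = matching_orbit m n (3 - q0) (- s) (prod.swap c2) j"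
    using matching_orbits_meet_in_row[of "- s" "prod.swap c1" m n "prod.swap c2" "3 - q0"] s by auto
  have e: "3 - (q0 + s * int j) = 3 - q0 + - s * int j" by simp
  have "prod.swap (grid_matching m n (3 - (q0 + s * int j))
      (matching_orbit m n (3 - q0) (- s) (prod.swap c1) j)) =
    prod.swap (matching_orbit m n (3 - q0) (- s) (prod.swap c2) j)"
    unfolding e j ..
  then show ?thesis
    unfolding grid_matching_transpose[symmetric] matching_orbit_transpose[symmetric] by auto
qed (rule matching_orbits_meet_in_row[OF s c1 c2 ne])

lemma two_in_a_line:
  assumes A: "A \<subseteq> grid n m" and card: "min n m < card A"
  obtains c1 c2 where "c1 \<in> A" "c2 \<in> A" "c1 \<noteq> c2" "fst c1 = fst c2 \<or> snd c1 = snd c2"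
proof -
  have "\<not> inj_on fst A \<or> \<not> inj_on snd A"
  proof (rule ccontr)
    assume "\<not> ?thesis"
    then have "card (fst ` A) = card A" "card (snd ` A) = card A" by (simp_all add: card_image)
    moreover have "fst ` A \<subseteq> {1..n}" "snd ` A \<subseteq> {1..m}" using A unfolding grid_def by auto
    then have "card (fst ` A) \<le> card {1..n}" "card (snd ` A) \<le> card {1..m}"
      by (meson card_mono finite_atLeastAtMost)+
    ultimately show False using card by simp
  qed
  then show thesis using that unfolding inj_on_def by blast
qed

lemma matching_at_quarter_steps:
  assumes "phase f g t = of_int q * pi / 2"
  shows "matching_at n m f g (t + real j / 4) = grid_matching n m (q + g (1,1) * int j)"
  by (rule matching_at_quarter) (simp add: phase_shift assms algebra_simps)

lemma run_follows_matching_orbit: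
  assumes S: "sync_schedule n m f g" and e: "e \<in> event_times n m f g"
    and free: "\<And>k r. K \<le> k \<Longrightarrow> run n m f g S0 lv (Suc k) r =
      map_option (matching_at n m f g (ev n m f g k)) (run n m f g S0 lv k r)"
    and q: "phase f g (ev n m f g K) = of_int q * pi / 2"
    and start: "run n m f g S0 lv K r = Some c"
    and "K \<le> k" and "ev n m f g k = ev n m f g K + real j / 4"
  shows "run n m f g S0 lv k r = Some (matching_orbit n m q (g (1,1)) c j)"
  using \<open>K \<le> k\<close> \<open>ev n m f g k = ev n m f g K + real j / 4\<close>
proof (induction k arbitrary: j rule: dec_induct)
  case base
  then show ?case using start by simp
next
  case (step k)
  obtain i where i: "ev n m f g k = ev n m f g K + real i / 4" using ev_offset[OF S e step.hyps(1)] .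
  have "i < j" using ev_less_Suc[OF S e, of k] step.prems i by simp
  have c: "c \<in> grid n m" using config_in_gridD[OF config_in_grid_run start] by blast
  have between: "grid_matching n m (q + g (1,1) * int x) d = d"
    if "Suc i \<le> x" "x < j" "d \<in> grid n m" for x d
  proof -
    let ?t = "ev n m f g K + real x / 4"
    have "ev n m f g k < ?t" "?t < ev n m f g (Suc k)" using that i step.prems by auto
    moreover have "0 \<le> ?t"
      using ev_in_event_times[OF S e, of K] unfolding event_times_def by simp
    ultimately have "\<forall>d\<in>grid n m. matching_at n m f g ?t d = d"
      using ev_Suc_le[of ?t n m f g k] event_times_iff[OF S] by fastforce
    then show ?thesis using matching_at_quarter_steps[OF q] that(3) by metis
  qed
  have "run n m f g S0 lv (Suc k) r =
      Some (matching_at n m f g (ev n m f g k) (matching_orbit n m q (g (1,1)) c i))"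
    using free[OF step.hyps(1)] step.IH[OF i] by simp
  also have "\<dots> = Some (matching_orbit n m q (g (1,1)) c (Suc i))"
    unfolding i matching_at_quarter_steps[OF q] by simp
  also have "\<dots> = Some (matching_orbit n m q (g (1,1)) c j)"
    using matching_orbit_constant[OF between c, of "Suc i" j] \<open>i < j\<close> by simp
  finally show ?case .
qed

lemma robots_in_a_line_meet:
  assumes S: "sync_schedule n m f g" and e: "e \<in> event_times n m f g"
    and free: "\<And>k r. K \<le> k \<Longrightarrow> run n m f g S0 lv (Suc k) r =
      map_option (matching_at n m f g (ev n m f g k)) (run n m f g S0 lv k r)"
    and r1: "run n m f g S0 lv K r1 = Some c1" and r2: "run n m f g S0 lv K r2 = Some c2"
    and "r1 \<noteq> r2" and line: "fst c1 = fst c2 \<or> snd c1 = snd c2"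
  shows "\<exists>k\<ge>K. meet n m f g (ev n m f g k) (run n m f g S0 lv k)"
proof -
  have grid: "c1 \<in> grid n m" "c2 \<in> grid n m"
    using config_in_gridD[OF config_in_grid_run] r1 r2 by blast+
  have "c1 \<noteq> c2" using run_injective[OF S] r1 r2 \<open>r1 \<noteq> r2\<close> by blast
  obtain q where q: "phase f g (ev n m f g K) = of_int q * pi / 2"
    using event_time_quarter[OF S ev_in_event_times[OF S e]] .
  have "odd (g (1,1))" using sync_schedule_direction[OF S e] by auto
  then obtain j where j: "grid_matching n m (q + g (1,1) * int j) (matching_orbit n m q (g (1,1)) c1 j) =
      matching_orbit n m q (g (1,1)) c2 j"
    using matching_orbits_meet[OF _ grid \<open>c1 \<noteq> c2\<close> line] by blast
  let ?t = "ev n m f g K + real j / 4"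
  let ?d1 = "matching_orbit n m q (g (1,1)) c1 j" and ?d2 = "matching_orbit n m q (g (1,1)) c2 j"
  have moved: "matching_at n m f g ?t ?d1 = ?d2" "?d2 \<noteq> ?d1"
    using j matching_at_quarter_steps[OF q] matching_orbit_inj[OF grid \<open>c1 \<noteq> c2\<close>, of q "g (1,1)" j]
    by simp_all
  have d1: "?d1 \<in> grid n m" using matching_orbit_in_grid[OF grid(1)] .
  have "ev n m f g K \<le> ?t" by simp
  moreover have "?t \<in> event_times n m f g"
    using ev_in_event_times[OF S e, of K] moved d1 event_times_iff[OF S] by force
  ultimately obtain k where k: "K \<le> k" "ev n m f g k = ?t"
    using event_time_is_ev[OF S] by blast
  have "run n m f g S0 lv k r1 = Some ?d1" "run n m f g S0 lv k r2 = Some ?d2"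
    using run_follows_matching_orbit[OF S e free q _ k] r1 r2 by blast+
  then have "meet n m f g (ev n m f g k) (run n m f g S0 lv k)"
    unfolding meet_iff[OF S] k(2) using moved d1 occupiedI[OF config_in_grid_run] by metis
  then show ?thesis using k(1) by blast
qed

lemma min_less_mult:
  fixes n m :: nat
  assumes "1 \<le> n" "1 \<le> m" "\<not> (n = 1 \<and> m = 1)"
  shows "min n m < n * m"
proof (cases "n \<le> m")
  case True
  then have "2 \<le> m" using assms by linarith
  then have "n * 2 \<le> n * m" by simp
  then show ?thesis using True assms(1) by simp
next
  case False
  then have "2 \<le> n" using assms by linarith
  then have "2 * m \<le> n * m" by simp
  then show ?thesis using False assms(2) by simp
qed

lemma no_starvation:
  assumes S: "sync_schedule n m f g" and nm: "1 \<le> n" "1 \<le> m" "\<not> (n = 1 \<and> m = 1)"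
    and S0: "S0 \<subseteq> grid n m" and card_S0: "card S0 = n * m - min n m - 1"
  shows "\<not> starvation n m f g S0 lv"
proof
  assume "starvation n m f g S0 lv"
  then obtain K where K: "\<And>k. K \<le> k \<Longrightarrow> \<not> meet n m f g (ev n m f g k) (run n m f g S0 lv k)"
    unfolding starvation_def by blast
  define K' where "K' = K + sum lv S0"
  have finite_S0: "finite S0" using finite_subset[OF S0 finite_grid] .
  have gone: "lv r \<le> k" if "r \<in> S0" "K' \<le> k" for r k
    using member_le_sum[OF that(1) _ finite_S0, of lv] that(2) unfolding K'_def by simp
  obtain e where e: "e \<in> event_times n m f g" using event_times_nonempty[OF S nm] .
  have free: "run n m f g S0 lv (Suc k) r =
      map_option (matching_at n m f g (ev n m f g k)) (run n m f g S0 lv k r)"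
    if "K' \<le> k" for k r
  proof (rule run_Suc_after_leaving[OF S])
    show "\<And>r. r \<in> S0 \<Longrightarrow> lv r \<le> k" using gone that by blast
    show "\<not> meet n m f g (ev n m f g k) (run n m f g S0 lv k)" using K that unfolding K'_def by simp
  qed
  define R where "R = grid n m - S0"
  define pos where "pos r = the (run n m f g S0 lv K' r)" for r
  have run_pos: "run n m f g S0 lv K' r = Some (pos r)" if "r \<in> R" for r
    using run_alive[of r n m S0 f g lv K'] that unfolding R_def pos_def by auto
  have "inj_on pos R"
  proof (rule inj_onI)
    fix r1 r2 assume "r1 \<in> R" "r2 \<in> R" "pos r1 = pos r2"
    then have "run n m f g S0 lv K' r1 = Some (pos r1)" "run n m f g S0 lv K' r2 = Some (pos r1)"
      using run_pos by simp_all
    then show "r1 = r2" by (rule run_injective[OF S])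
  qed
  moreover have "card R = n * m - (n * m - min n m - 1)"
    unfolding R_def using card_Diff_subset[OF finite_S0 S0] card_grid card_S0 by simp
  ultimately have card_pos: "min n m < card (pos ` R)"
    using min_less_mult[OF nm] by (simp add: card_image)
  have "pos ` R \<subseteq> grid n m"
    using config_in_gridD[OF config_in_grid_run] run_pos by blast
  then obtain c1 c2 where "c1 \<in> pos ` R" "c2 \<in> pos ` R" "c1 \<noteq> c2"
    and line: "fst c1 = fst c2 \<or> snd c1 = snd c2"
    using card_pos by (rule two_in_a_line)
  then obtain r1 r2 where "r1 \<in> R" "r2 \<in> R" "r1 \<noteq> r2" "c1 = pos r1" "c2 = pos r2" by blast
  with line obtain k where "K' \<le> k" "meet n m f g (ev n m f g k) (run n m f g S0 lv k)"
    using robots_in_a_line_meet[OF S e free run_pos run_pos] by blast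
  then show False using K unfolding K'_def by simp
qed

lemma resilient_to_bound:
  assumes S: "sync_schedule n m f g" and k: "0 \<le> k" "k \<le> int (n * m)"
    and resilient: "resilient_to n m f g (nat k)"
  shows "k \<le> int (n * m) - int (min n m) - 1"
proof (rule ccontr)
  assume "\<not> ?thesis"
  then have "n * m - min n m \<le> nat k" "nat k \<le> n * m" using k by linarith+
  then show False using not_resilient_to[OF S] resilient by blast
qed

theorem theorem11:
  fixes n m :: nat and f :: "cell \<Rightarrow> real" and g :: "cell \<Rightarrow> int"
  assumes "n \<ge> 1" and "m \<ge> 1" and "sync_schedule n m f g"
  shows "isolation_resilience n m f g = int (n * m) - int (min n m) - 1"
proof -
  define P where "P k \<longleftrightarrow> k = -1 \<or> (0 \<le> k \<and> k \<le> int (n * m) \<and> resilient_to n m f g (nat k))" for k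
  have "P (int (n * m) - int (min n m) - 1)"
  proof (cases "n = 1 \<and> m = 1")
    case False
    then have "min n m < n * m" using min_less_mult assms(1,2) by blast
    moreover have "resilient_to n m f g (n * m - min n m - 1)"
      unfolding resilient_to_def using no_starvation[OF assms(3,1,2) False] by blast
    moreover have "int (n * m) - int (min n m) - 1 = int (n * m - min n m - 1)"
      using \<open>min n m < n * m\<close> by linarith
    ultimately show ?thesis unfolding P_def by simp
  qed (simp add: P_def)
  moreover have "min n m \<le> n * m" using assms(2) by (simp add: min.coboundedI1)
  then have "int (min n m) \<le> int (n * m)" by (rule of_nat_mono)
  then have "P k \<Longrightarrow> k \<le> int (n * m) - int (min n m) - 1" for k
    unfolding P_def using resilient_to_bound[OF assms(3), of k] by auto
  ultimately show ?thesis
    unfolding isolation_resilience_def P_def[symmetric] by (rule Greatest_equality)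
qed

end
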